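(* Let $p\ge 2$ be an integer, $r=p-1$, and $h=1/n$ a mesh size. Let $\mathbf F^{(L)}:[-1,0]\times[0,1]\to\mathbb R^2$ and $\mathbf F^{(R)}:[0,1]\times[0,1]\to\mathbb R^2$ have each component in $\mathcal S^p_{p-1}$ of its parameter domain, have non-vanishing Jacobian determinant on their closed parameter domains, have images $\Omega^{(L)},\Omega^{(R)}$ with disjoint interiors, and satisfy $\mathbf F^{(L)}(0,v)=\mathbf F^{(R)}(0,v)=:\mathbf F_0(v)$ for $v\in[0,1]$. Let $\Omega=\Omega^{(L)}\cup\Omega^{(R)}$, $\Gamma=\Omega^{(L)}\cap\Omega^{(R)}$, and assume $\mathbf F^{(L)},\mathbf F^{(R)}$ are analysis-suitable $G^1$-continuous at $\Gamma$ with linear coefficients $\alpha^{(L)},\alpha^{(R)},\beta^{(L)},\beta^{(R)}$. Let $\mathcal G_0,\mathcal G_1$ be linear spaces of functions on $[0,1]$ with $\mathcal G_0\times\mathcal G_1\subseteq\widehat{\mathcal V^1_\Gamma}$. Then: (i) if $\beta^{(L)}$ or $\beta^{(R)}$ is not identically zero, the dimension of $\mathcal G_0$ is bounded independently of $h$; (ii) if $\alpha^{(L)}$ and $\alpha^{(R)}$ are linearly independent, the dimension of $\mathcal G_1$ is bounded independently of $h$.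
   Context: Spline spaces: on $[0,1]$ take the uniform knots $0,h,\dots,1$; $\mathcal S^q_s([0,1])$ is the space of piecewise polynomials of degree at most $q$ on the knot intervals that are $C^s$ at interior knots (global polynomials of degree $\le q$ if $s\ge q$); analogously on $[-1,0]$, and on rectangles $[a,a+1]\times[0,1]$ $\mathcal S^q_s$ is the tensor product of the univariate spaces. $\mathcal V=\{\phi:\Omega\to\mathbb R:\ \phi\circ\mathbf F^{(S)}\in\mathcal S^p_{p-1}\text{ of the parameter domain of }\mathbf F^{(S)},\ S\in\{L,R\}\}$, $\mathcal V^1=\mathcal V\cap C^1(\Omega)$. Analysis-suitable $G^1$-continuity: there exist $\alpha^{(L)},\alpha^{(R)},\beta^{(L)},\beta^{(R)}$, polynomials of degree at most $1$ on $[0,1]$, with $\alpha^{(L)}(v)\alpha^{(R)}(v)>0$ for all $v$, such that for all $v\in[0,1]$: $\alpha^{(R)}(v)D_u\mathbf F^{(L)}(0,v)-\alpha^{(L)}(v)D_u\mathbf F^{(R)}(0,v)=(\alpha^{(R)}(v)\beta^{(L)}(v)-\alpha^{(L)}(v)\beta^{(R)}(v))D_v\mathbf F_0(v)$. Transversal vector on $\Gamma$: $\mathbf d(\mathbf F_0(v))=\frac{1}{\alpha^{(L)}(v)}(D_u\mathbf F^{(L)}(0,v)-\beta^{(L)}(v)D_v\mathbf F_0(v))$. Trace space: $\widehat{\mathcal V^1_\Gamma}=\{v\mapsto[\phi(\mathbf F_0(v)),(\nabla\phi\cdot\mathbf d)(\mathbf F_0(v))]:\phi\in\mathcal V^1\}$.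 *)

theory Defs
  imports "HOL-Analysis.Analysis" "HOL-Computational_Algebra.Polynomial"
begin

text \<open>If s \<ge> q this
  forces a single global polynomial.  Only the values on [a,a+1] matter.\<close>
definition spline1 :: "nat \<Rightarrow> nat \<Rightarrow> nat \<Rightarrow> real \<Rightarrow> (real \<Rightarrow> real) \<Rightarrow> bool" where
  "spline1 q s n a f \<longleftrightarrow>
     (\<exists>P :: nat \<Rightarrow> real poly.
        (\<forall>k<n. degree (P k) \<le> q \<and>
              (\<forall>x\<in>{a + real k / real n .. a + real (Suc k) / real n}. f x = poly (P k) x)) \<and>
        (\<forall>k. 0 < k \<and> k < n \<longrightarrow>
              (\<forall>j\<le>s. poly ((pderiv ^^ j) (P (k - 1))) (a + real k / real n)
                     = poly ((pderiv ^^ j) (P k)) (a + real k / real n))))"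

definition spline2 :: "nat \<Rightarrow> nat \<Rightarrow> nat \<Rightarrow> real \<Rightarrow> (real \<times> real \<Rightarrow> real) \<Rightarrow> bool" where
  "spline2 q s n a \<Phi> \<longleftrightarrow>
     (\<exists>(m::nat) (f::nat \<Rightarrow> real \<Rightarrow> real) (g::nat \<Rightarrow> real \<Rightarrow> real).
        (\<forall>i<m. spline1 q s n a (f i) \<and> spline1 q s n 0 (g i)) \<and>
        (\<forall>u\<in>{a..a+1}. \<forall>v\<in>{0..1}. \<Phi> (u, v) = (\<Sum>i<m. f i u * g i v)))"

definition rect :: "real \<Rightarrow> (real \<times> real) set" where
  "rect a = {a..a+1} \<times> {0..1}"

definition Du :: "real \<Rightarrow> (real \<times> real \<Rightarrow> real \<times> real) \<Rightarrow> real \<times> real \<Rightarrow> real \<times> real" where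
  "Du a F x = vector_derivative (\<lambda>t. F (t, snd x)) (at (fst x) within {a..a+1})"

definition Dv :: "(real \<times> real \<Rightarrow> real \<times> real) \<Rightarrow> real \<times> real \<Rightarrow> real \<times> real" where
  "Dv F x = vector_derivative (\<lambda>t. F (fst x, t)) (at (snd x) within {0..1})"

definition jacdet :: "real \<Rightarrow> (real \<times> real \<Rightarrow> real \<times> real) \<Rightarrow> real \<times> real \<Rightarrow> real" where
  "jacdet a F x = fst (Du a F x) * snd (Dv F x) - snd (Du a F x) * fst (Dv F x)"

definition patch :: "nat \<Rightarrow> nat \<Rightarrow> real \<Rightarrow> (real \<times> real \<Rightarrow> real \<times> real) \<Rightarrow> bool" where
  "patch p n a F \<longleftrightarrow>
     spline2 p (p - 1) n a (\<lambda>x. fst (F x)) \<and> spline2 p (p - 1) n a (\<lambda>x. snd (F x)) \<and>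
     (\<forall>x\<in>rect a. jacdet a F x \<noteq> 0)"

definition F0 :: "(real \<times> real \<Rightarrow> real \<times> real) \<Rightarrow> real \<Rightarrow> real \<times> real" where
  "F0 FL v = FL (0, v)"

definition DF0 :: "(real \<times> real \<Rightarrow> real \<times> real) \<Rightarrow> real \<Rightarrow> real \<times> real" where
  "DF0 FL v = vector_derivative (F0 FL) (at v within {0..1})"

definition Omega :: "(real \<times> real \<Rightarrow> real \<times> real) \<Rightarrow> (real \<times> real \<Rightarrow> real \<times> real) \<Rightarrow> (real \<times> real) set" where
  "Omega FL FR = FL ` rect (-1) \<union> FR ` rect 0"

definition AS_G1 :: "(real \<times> real \<Rightarrow> real \<times> real) \<Rightarrow> (real \<times> real \<Rightarrow> real \<times> real) \<Rightarrow>
    real poly \<Rightarrow> real poly \<Rightarrow> real poly \<Rightarrow> real poly \<Rightarrow> bool" where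
  "AS_G1 FL FR aL aR bL bR \<longleftrightarrow>
     degree aL \<le> 1 \<and> degree aR \<le> 1 \<and> degree bL \<le> 1 \<and> degree bR \<le> 1 \<and>
     (\<forall>v\<in>{0..1}. poly aL v * poly aR v > 0) \<and>
     (\<forall>v\<in>{0..1}. poly aR v *\<^sub>R Du (-1) FL (0, v) - poly aL v *\<^sub>R Du 0 FR (0, v)
                  = (poly aR v * poly bL v - poly aL v * poly bR v) *\<^sub>R DF0 FL v)"

definition dvec :: "(real \<times> real \<Rightarrow> real \<times> real) \<Rightarrow> real poly \<Rightarrow> real poly \<Rightarrow> real \<Rightarrow> real \<times> real" where
  "dvec FL aL bL v = (1 / poly aL v) *\<^sub>R (Du (-1) FL (0, v) - poly bL v *\<^sub>R DF0 FL v)"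

definition Vsp :: "nat \<Rightarrow> nat \<Rightarrow> (real \<times> real \<Rightarrow> real \<times> real) \<Rightarrow> (real \<times> real \<Rightarrow> real \<times> real) \<Rightarrow>
    (real \<times> real \<Rightarrow> real) \<Rightarrow> bool" where
  "Vsp p n FL FR \<phi> \<longleftrightarrow> spline2 p (p - 1) n (-1) (\<phi> \<circ> FL) \<and> spline2 p (p - 1) n 0 (\<phi> \<circ> FR)"

definition C1_grad :: "(real \<times> real) set \<Rightarrow> (real \<times> real \<Rightarrow> real) \<Rightarrow> (real \<times> real \<Rightarrow> real \<times> real) \<Rightarrow> bool" where
  "C1_grad S \<phi> G \<longleftrightarrow> continuous_on S G \<and>
     (\<forall>x\<in>S. (\<phi> has_derivative (\<lambda>y. G x \<bullet> y)) (at x within S))"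

text \<open>Trace space of V^1 = V \<inter> C^1(Omega) on Gamma; functions on [0,1] are represented
  extensionally (zero outside [0,1]).\<close>
definition trace_space :: "nat \<Rightarrow> nat \<Rightarrow> (real \<times> real \<Rightarrow> real \<times> real) \<Rightarrow> (real \<times> real \<Rightarrow> real \<times> real) \<Rightarrow>
    real poly \<Rightarrow> real poly \<Rightarrow> ((real \<Rightarrow> real) \<times> (real \<Rightarrow> real)) set" where
  "trace_space p n FL FR aL bL =
     {(g0, g1). \<exists>\<phi> G. Vsp p n FL FR \<phi> \<and> C1_grad (Omega FL FR) \<phi> G \<and>
        (\<forall>v. g0 v = (if v \<in> {0..1} then \<phi> (F0 FL v) else 0)) \<and>
        (\<forall>v. g1 v = (if v \<in> {0..1} then G (F0 FL v) \<bullet> dvec FL aL bL v else 0))}"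

definition lin_space :: "(real \<Rightarrow> real) set \<Rightarrow> bool" where
  "lin_space V \<longleftrightarrow> (\<lambda>x. 0) \<in> V \<and> (\<forall>f\<in>V. \<forall>g\<in>V. (\<lambda>x. f x + g x) \<in> V) \<and>
     (\<forall>c. \<forall>f\<in>V. (\<lambda>x. c * f x) \<in> V)"

definition lin_indep :: "(real \<Rightarrow> real) set \<Rightarrow> bool" where
  "lin_indep B \<longleftrightarrow> (\<forall>c. (\<forall>x. (\<Sum>b\<in>B. c b * b x) = 0) \<longrightarrow> (\<forall>b\<in>B. c b = 0))"

definition dim_atmost :: "(real \<Rightarrow> real) set \<Rightarrow> nat \<Rightarrow> bool" where
  "dim_atmost V N \<longleftrightarrow> (\<forall>B. B \<subseteq> V \<and> finite B \<and> lin_indep B \<longrightarrow> card B \<le> N)"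

end

theory Submission
  imports Defs "HOL-Library.Function_Algebras"
begin

text \<open>
  Both spaces contain 0, so every element of one of them is a trace component of a C^1
  function whose other trace component vanishes.

  (i) If g1 = 0, the transversal derivatives of the two pieces of the C^1 function are the
  splines bL g0' and bR g0'. At an interior knot where a nonzero one of the linear weights b does
  not vanish, C^(p-1)-continuity of b g0' makes the degree p spline g0 C^p there, so its
  two adjacent polynomial pieces coincide. A nonzero linear b vanishes at no more than one knot,
  so g0 consists of at most two polynomials of degree p, split at a point depending only on b.

  (ii) If g0 = 0, the transversal derivatives are aL g1 and aR g1. Since aL, aR are linearly
  independent of degree at most one, both 1 and x are combinations of them, so g1 and x g1 are
  splines of degree p. Hence the pieces of g1 have degree p - 1 and C^(p-1) joints, which makes
  g1 a single polynomial.
\<close>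

section \<open>Polynomials\<close>

lemma higher_pderiv_diff:
  fixes p q :: "'a::idom poly"
  shows "(pderiv ^^ n) (p - q) = (pderiv ^^ n) p - (pderiv ^^ n) q"
  by (induction n) (simp_all add: pderiv_diff)

lemma poly_eq_0_if_pderiv_eq_0:
  fixes R :: "'a::{idom,semiring_char_0} poly"
  assumes "pderiv R = 0" "poly R t = 0"
  shows "R = 0"
  using assms by (auto dest: pderiv_iszero)

lemma linear_power_dvd_if_higher_pderiv_vanish:
  fixes D :: "'a::{idom,semiring_char_0} poly"
  assumes "\<forall>j<m. poly ((pderiv ^^ j) D) t = 0"
  shows "[:-t, 1:] ^ m dvd D"
  using assms
proof (induction m arbitrary: D)
  case 0
  then show ?case by simp
next
  case (Suc m)
  have root: "poly D t = 0"
    using Suc.prems by (metis funpow_0 zero_less_Suc)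
  have "\<forall>j<m. poly ((pderiv ^^ j) (pderiv D)) t = 0"
    using Suc.prems by (metis Suc_mono comp_apply funpow_Suc_right)
  then have "[:-t, 1:] ^ m dvd pderiv D"
    by (rule Suc.IH)
  show ?case
  proof (cases "D = 0")
    case False
    then have "pderiv D \<noteq> 0"
      using root poly_eq_0_if_pderiv_eq_0 by blast
    with \<open>[:-t, 1:] ^ m dvd pderiv D\<close> have "m \<le> order t (pderiv D)"
      by (simp add: order_divides)
    then have "Suc m \<le> order t D"
      using order_pderiv[OF False root] by simp
    then show ?thesis
      using order_divides by blast
  qed simp
qed

lemma poly_eq_0_if_higher_pderiv_vanish:
  fixes R :: "'a::{idom,semiring_char_0} poly"
  assumes "degree R \<le> m" "\<forall>j\<le>m. poly ((pderiv ^^ j) R) t = 0"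
  shows "R = 0"
proof (rule ccontr)
  assume "R \<noteq> 0"
  have "[:-t, 1:] ^ Suc m dvd R"
    using assms(2) by (intro linear_power_dvd_if_higher_pderiv_vanish) (simp add: less_Suc_eq_le)
  then have "Suc m \<le> degree R"
    using dvd_imp_degree_le[OF _ \<open>R \<noteq> 0\<close>] by (metis degree_linear_power)
  with assms(1) show False by simp
qed

text \<open>Only the value of R at t is needed: a non-vanishing weight cannot absorb the
  zero of order m of the weighted derivative, whose degree is below m.\<close>
lemma poly_eq_0_if_weighted_pderiv_vanishes:
  fixes R \<beta> :: "'a::{idom,semiring_char_0} poly"
  assumes "degree R \<le> m" "poly R t = 0" "poly \<beta> t \<noteq> 0"
    and "\<forall>j<m. poly ((pderiv ^^ j) (\<beta> * pderiv R)) t = 0"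
  shows "R = 0"
proof -
  have "pderiv R = 0"
  proof (rule ccontr)
    assume R': "pderiv R \<noteq> 0"
    have "\<beta> \<noteq> 0" using assms(3) by auto
    have "[:-t, 1:] ^ m dvd \<beta> * pderiv R"
      using assms(4) by (rule linear_power_dvd_if_higher_pderiv_vanish)
    then have "m \<le> order t (\<beta> * pderiv R)"
      using \<open>\<beta> \<noteq> 0\<close> R' by (simp add: order_divides)
    also have "\<dots> = order t (pderiv R)"
      using \<open>\<beta> \<noteq> 0\<close> R' assms(3) by (simp add: order_mult order_0I)
    also have "\<dots> \<le> degree R - 1"
      using order_degree[OF R'] by (simp add: degree_pderiv)
    finally have "degree R = 0" using assms(1) by simp
    then show False using R' by (simp add: pderiv_eq_0_iff)
  qed
  then show ?thesis using assms(2) by (rule poly_eq_0_if_pderiv_eq_0)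
qed

lemma poly_eq_if_eq_on_Ioo:
  fixes P Q :: "real poly"
  assumes "a < b" "\<forall>x\<in>{a<..<b}. poly P x = poly Q x"
  shows "P = Q"
proof (rule ccontr)
  assume "P \<noteq> Q"
  then have "finite {x. poly (P - Q) x = 0}" by (intro poly_roots_finite) simp
  moreover have "{a<..<b} \<subseteq> {x. poly (P - Q) x = 0}" using assms(2) by auto
  ultimately show False using infinite_Ioo[OF assms(1)] finite_subset by blast
qed

lemma linear_poly_root_unique:
  fixes \<beta> :: "'a::idom poly"
  assumes "degree \<beta> \<le> 1" "\<beta> \<noteq> 0" "poly \<beta> x = 0" "poly \<beta> y = 0"
  shows "x = y"
proof (rule ccontr)
  assume "x \<noteq> y"
  have "\<beta> = 0"
    by (rule poly_eqI_degree[of "{x, y}"]) (use assms \<open>x \<noteq> y\<close> in auto)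
  with assms(2) show False ..
qed

lemma knot_avoiding_roots:
  fixes \<beta> :: "real poly"
  assumes "degree \<beta> \<le> 1" "\<beta> \<noteq> 0" "1 \<le> n"
  obtains K where "K < n" "\<forall>k. 0 < k \<and> k < n \<and> k \<noteq> K \<longrightarrow> poly \<beta> (real k / real n) \<noteq> 0"
proof (cases "\<exists>K. 0 < K \<and> K < n \<and> poly \<beta> (real K / real n) = 0")
  case True
  then obtain K where K: "0 < K" "K < n" "poly \<beta> (real K / real n) = 0" by blast
  have "k = K" if "0 < k" "k < n" "poly \<beta> (real k / real n) = 0" for k
    using linear_poly_root_unique[OF assms(1,2) that(3) K(3)] assms(3) by simp
  with K(2) show ?thesis using that by blast
next
  case False
  with assms(3) show ?thesis using that[of 0] by auto
qed

lemma poly_eq_if_coeffs_01_eq: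
  fixes P Q :: "'a::zero poly"
  assumes "degree P \<le> 1" "degree Q \<le> 1" "coeff P 0 = coeff Q 0" "coeff P 1 = coeff Q 1"
  shows "P = Q"
proof (rule poly_eqI)
  fix i show "coeff P i = coeff Q i"
    using assms by (cases "i \<le> 1") (auto simp: le_Suc_eq coeff_eq_0)
qed

text \<open>Cramer's rule for the two coefficients of a polynomial of degree at most one.\<close>
lemma independent_linear_polys_span:
  fixes aL aR T :: "real poly"
  assumes deg: "degree aL \<le> 1" "degree aR \<le> 1" "degree T \<le> 1"
    and indep: "\<forall>c1 c2. smult c1 aL + smult c2 aR = 0 \<longrightarrow> c1 = 0 \<and> c2 = 0"
  obtains c1 c2 where "smult c1 aL + smult c2 aR = T"
proof -
  define l0 l1 r0 r1 where lr: "l0 = coeff aL 0" "l1 = coeff aL 1" "r0 = coeff aR 0" "r1 = coeff aR 1"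
  define \<Delta> where "\<Delta> = l0 * r1 - l1 * r0"
  have comb: "smult c1 aL + smult c2 aR = U \<longleftrightarrow>
      c1 * l0 + c2 * r0 = coeff U 0 \<and> c1 * l1 + c2 * r1 = coeff U 1" if "degree U \<le> 1" for c1 c2 U
  proof
    show "c1 * l0 + c2 * r0 = coeff U 0 \<and> c1 * l1 + c2 * r1 = coeff U 1"
      if "smult c1 aL + smult c2 aR = U" using that by (auto simp: lr)
    have "degree (smult c1 aL + smult c2 aR) \<le> 1"
      using deg by (intro degree_add_le) simp_all
    then show "smult c1 aL + smult c2 aR = U"
      if "c1 * l0 + c2 * r0 = coeff U 0 \<and> c1 * l1 + c2 * r1 = coeff U 1"
      using that \<open>degree U \<le> 1\<close> by (intro poly_eq_if_coeffs_01_eq) (auto simp: lr)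
  qed
  have "\<Delta> \<noteq> 0"
  proof
    assume "\<Delta> = 0"
    then have "smult r1 aL + smult (- l1) aR = 0"
      using comb[of 0 r1 "- l1"] by (simp add: \<Delta>_def mult.commute)
    from indep[rule_format, OF this] have "r1 = 0" "l1 = 0" by simp_all
    then have "smult r0 aL + smult (- l0) aR = 0"
      using comb[of 0 r0 "- l0"] by (simp add: mult.commute)
    from indep[rule_format, OF this] have "l0 = 0" by simp
    then have "smult 1 aL + smult 0 aR = 0"
      using comb[of 0 1 0] \<open>l1 = 0\<close> by simp
    from indep[rule_format, OF this] show False by simp
  qed
  define t0 t1 where t: "t0 = coeff T 0" "t1 = coeff T 1"
  have "(t0 * r1 - t1 * r0) / \<Delta> * l0 + (l0 * t1 - l1 * t0) / \<Delta> * r0 = t0"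
    "(t0 * r1 - t1 * r0) / \<Delta> * l1 + (l0 * t1 - l1 * t0) / \<Delta> * r1 = t1"
    using \<open>\<Delta> \<noteq> 0\<close> unfolding \<Delta>_def by (simp_all add: divide_simps) (simp_all add: algebra_simps)
  then have "smult ((t0 * r1 - t1 * r0) / \<Delta>) aL + smult ((l0 * t1 - l1 * t0) / \<Delta>) aR = T"
    using comb[OF deg(3)] by (simp add: t)
  then show ?thesis by (rule that)
qed

section \<open>Splines\<close>

definition spline_pieces ::
    "nat \<Rightarrow> nat \<Rightarrow> nat \<Rightarrow> real \<Rightarrow> (real \<Rightarrow> real) \<Rightarrow> (nat \<Rightarrow> real poly) \<Rightarrow> bool" where
  "spline_pieces q s n a f P \<longleftrightarrow>
     (\<forall>k<n. degree (P k) \<le> q \<and>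
        (\<forall>x\<in>{a + real k / real n .. a + real (Suc k) / real n}. f x = poly (P k) x)) \<and>
     (\<forall>k. 0 < k \<and> k < n \<longrightarrow>
        (\<forall>j\<le>s. poly ((pderiv ^^ j) (P (k - 1))) (a + real k / real n)
               = poly ((pderiv ^^ j) (P k)) (a + real k / real n)))"

lemma spline1_iff_pieces: "spline1 q s n a f \<longleftrightarrow> (\<exists>P. spline_pieces q s n a f P)"
  unfolding spline1_def spline_pieces_def ..

lemma knot_interval_bounds:
  assumes "k < n"
  shows "a \<le> a + real k / real n" "a + real (Suc k) / real n \<le> a + 1"
  using assms by (simp_all add: divide_le_eq)

lemma knot_interval_right:
  assumes "1 \<le> n" "a \<le> v" "v < a + 1"
  obtains k where "k < n" "a + real k / real n \<le> v" "v < a + real (Suc k) / real n"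
proof
  define k where "k = nat \<lfloor>(v - a) * real n\<rfloor>"
  have n: "real n > 0" using assms(1) by simp
  have k: "real k = of_int \<lfloor>(v - a) * real n\<rfloor>" unfolding k_def using assms(2) by simp
  have "(v - a) * real n < real n"
    using mult_strict_right_mono[of "v - a" 1, OF _ n] assms(3) by simp
  moreover have "real k \<le> (v - a) * real n" "(v - a) * real n < real k + 1"
    unfolding k by linarith+
  ultimately have "real k < real n" "real k / real n \<le> v - a" "v - a < real (Suc k) / real n"
    using n by (simp_all add: field_simps)
  then show "k < n" "a + real k / real n \<le> v" "v < a + real (Suc k) / real n" by simp_all
qed

lemma knot_interval_left:
  assumes "1 \<le> n" "a < v" "v \<le> a + 1"
  obtains k where "k < n" "a + real k / real n < v" "v \<le> a + real (Suc k) / real n"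
proof
  define k where "k = nat (\<lceil>(v - a) * real n\<rceil> - 1)"
  have n: "real n > 0" using assms(1) by simp
  have "\<lceil>(v - a) * real n\<rceil> \<ge> 1" using assms n by (simp add: Suc_le_eq)
  then have k: "real k = of_int \<lceil>(v - a) * real n\<rceil> - 1" unfolding k_def by simp
  have "(v - a) * real n \<le> real n"
    using mult_right_mono[of "v - a" 1 "real n"] assms(3) n by simp
  moreover have "real k < (v - a) * real n" "(v - a) * real n \<le> real k + 1"
    unfolding k by linarith+
  ultimately have "real k < real n" "real k / real n < v - a" "v - a \<le> real (Suc k) / real n"
    using n by (simp_all add: field_simps)
  then show "k < n" "a + real k / real n < v" "v \<le> a + real (Suc k) / real n" by simp_all
qed

lemma spline1_cong:
  assumes "spline1 q s n a f" "\<forall>x\<in>{a..a+1}. f x = g x"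
  shows "spline1 q s n a g"
proof -
  obtain P where P: "spline_pieces q s n a f P"
    using assms(1) by (auto simp: spline1_iff_pieces)
  have "x \<in> {a..a+1}" if "k < n" "x \<in> {a + real k / real n .. a + real (Suc k) / real n}" for k x
    using that knot_interval_bounds[OF that(1), of a] unfolding atLeastAtMost_iff by linarith
  with P have "spline_pieces q s n a g P"
    using assms(2) unfolding spline_pieces_def by metis
  then show ?thesis by (auto simp: spline1_iff_pieces)
qed

lemma spline1_zero: "spline1 q s n a (\<lambda>x. 0)"
  unfolding spline1_iff_pieces spline_pieces_def by (intro exI[of _ "\<lambda>k. 0"]) simp

lemma spline1_add:
  assumes "spline1 q s n a f" "spline1 q s n a g"
  shows "spline1 q s n a (\<lambda>x. f x + g x)"
proof -
  obtain P Q where "spline_pieces q s n a f P" "spline_pieces q s n a g Q"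
    using assms by (auto simp: spline1_iff_pieces)
  then have "spline_pieces q s n a (\<lambda>x. f x + g x) (\<lambda>k. P k + Q k)"
    unfolding spline_pieces_def by (auto simp: higher_pderiv_add intro: degree_add_le)
  then show ?thesis by (auto simp: spline1_iff_pieces)
qed

lemma spline1_scale:
  assumes "spline1 q s n a f"
  shows "spline1 q s n a (\<lambda>x. c * f x)"
proof -
  obtain P where "spline_pieces q s n a f P"
    using assms by (auto simp: spline1_iff_pieces)
  then have "spline_pieces q s n a (\<lambda>x. c * f x) (\<lambda>k. smult c (P k))"
    unfolding spline_pieces_def by (auto simp: higher_pderiv_smult intro: order.trans[OF degree_smult_le])
  then show ?thesis by (auto simp: spline1_iff_pieces)
qed

lemma spline1_sum:
  assumes "\<forall>i\<in>I. spline1 q s n a (f i)"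
  shows "spline1 q s n a (\<lambda>x. \<Sum>i\<in>I. c i * f i x)"
  using assms
proof (induction I rule: infinite_finite_induct)
  case (insert i I)
  then have "spline1 q s n a (\<lambda>x. c i * f i x + (\<Sum>j\<in>I. c j * f j x))"
    by (intro spline1_add spline1_scale) auto
  with insert show ?case by simp
qed (simp_all add: spline1_zero)

lemma spline2_slice:
  assumes "spline2 q s n a \<Psi>" "u \<in> {a..a+1}"
  shows "spline1 q s n 0 (\<lambda>v. \<Psi> (u, v))"
proof -
  obtain m :: nat and f g :: "nat \<Rightarrow> real \<Rightarrow> real" where fg: "\<forall>i<m. spline1 q s n a (f i) \<and> spline1 q s n 0 (g i)"
    "\<forall>u\<in>{a..a+1}. \<forall>v\<in>{0..1}. \<Psi> (u, v) = (\<Sum>i<m. f i u * g i v)"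
    using assms(1) unfolding spline2_def by blast
  have "spline1 q s n 0 (\<lambda>v. \<Sum>i<m. f i u * g i v)"
    using fg(1) by (intro spline1_sum) auto
  then show ?thesis by (rule spline1_cong) (use fg(2) assms(2) in auto)
qed

lemma has_real_derivative_if_locally_poly:
  assumes "0 < e" "v \<in> S" "\<forall>y\<in>S. dist y v < e \<longrightarrow> f y = poly P y"
  shows "(f has_real_derivative poly (pderiv P) v) (at v within S)"
  using has_field_derivative_at_within[OF poly_DERIV[of P v]]
  by (rule has_field_derivative_transform_within[OF _ assms(1,2)]) (use assms(3) in auto)

lemma has_real_derivative_within_Un:
  assumes "(f has_real_derivative D) (at x within S)" "(f has_real_derivative D) (at x within T)"
  shows "(f has_real_derivative D) (at x within S \<union> T)"
  using assms unfolding has_field_derivative_def has_derivative_within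
  by (auto simp: Lim_within_Un)

lemma has_real_derivative_unique_within_interval:
  assumes "(f has_real_derivative D1) (at v within {a..b})" "(f has_real_derivative D2) (at v within {a..b})"
    "a < b" "v \<in> {a..b}"
  shows "D1 = D2"
  using vector_derivative_within_closed_interval[OF assms(3,4), of f D1]
    vector_derivative_within_closed_interval[OF assms(3,4), of f D2] assms(1,2)
  by (simp add: has_real_derivative_iff_has_vector_derivative)

lemma spline_pieces_right_derivative:
  assumes "spline_pieces q s n a f P" "k < n"
    and "a + real k / real n \<le> v" "v < a + real (Suc k) / real n"
  shows "(f has_real_derivative poly (pderiv (P k)) v) (at v within {v..a+1})"
proof (rule has_real_derivative_if_locally_poly)
  show "0 < a + real (Suc k) / real n - v" "v \<in> {v..a+1}"
    using assms(4) knot_interval_bounds[OF assms(2), of a] unfolding atLeastAtMost_iff by linarith+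
  show "\<forall>y\<in>{v..a+1}. dist y v < a + real (Suc k) / real n - v \<longrightarrow> f y = poly (P k) y"
    using assms unfolding spline_pieces_def dist_real_def by auto
qed

lemma spline_pieces_left_derivative:
  assumes "spline_pieces q s n a f P" "k < n"
    and "a + real k / real n < v" "v \<le> a + real (Suc k) / real n"
  shows "(f has_real_derivative poly (pderiv (P k)) v) (at v within {a..v})"
proof (rule has_real_derivative_if_locally_poly)
  show "0 < v - (a + real k / real n)" "v \<in> {a..v}"
    using assms(3) knot_interval_bounds[OF assms(2), of a] unfolding atLeastAtMost_iff by linarith+
  show "\<forall>y\<in>{a..v}. dist y v < v - (a + real k / real n) \<longrightarrow> f y = poly (P k) y"
    using assms unfolding spline_pieces_def dist_real_def by auto
qed

lemma spline_pieces_interior_derivative: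
  assumes "spline_pieces q s n a f P" "k < n"
    and "a + real k / real n < v" "v < a + real (Suc k) / real n"
  shows "(f has_real_derivative poly (pderiv (P k)) v) (at v within {a..a+1})"
proof -
  have "a \<le> v" "v \<le> a + 1"
    using assms(3,4) knot_interval_bounds[OF assms(2), of a] by linarith+
  then have "{a..v} \<union> {v..a+1} = {a..a+1}" by auto
  moreover have "(f has_real_derivative poly (pderiv (P k)) v) (at v within {a..v} \<union> {v..a+1})"
    using spline_pieces_left_derivative[OF assms(1-3) less_imp_le[OF assms(4)]]
      spline_pieces_right_derivative[OF assms(1,2) less_imp_le[OF assms(3)] assms(4)]
    by (rule has_real_derivative_within_Un)
  ultimately show ?thesis by simp
qed

text \<open>The pieces k' and k contain v from the left and from the right; they differ only
  when v is a knot, where C^1-continuity applies.\<close>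
lemma spline_pieces_one_sided_derivatives_agree:
  assumes P: "spline_pieces q s n a f P" and "1 \<le> s"
    and k: "k < n" "a + real k / real n \<le> v" "v < a + real (Suc k) / real n"
    and k': "k' < n" "a + real k' / real n < v" "v \<le> a + real (Suc k') / real n"
  shows "poly (pderiv (P k')) v = poly (pderiv (P k)) v"
proof -
  have n: "0 < real n" using k(1) by simp
  have "real k' / real n < real (Suc k) / real n" "real k / real n \<le> real (Suc k') / real n"
    using k k' by linarith+
  then have "k' < Suc k" "k \<le> Suc k'"
    using n by (simp_all only: divide_less_cancel divide_le_cancel of_nat_less_iff of_nat_le_iff simp_thms)
  then consider "k' = k" | "k = Suc k'" by linarith
  then show ?thesis
  proof cases
    case 2
    then have "v = a + real k / real n" using k(2) k'(3) by simp
    moreover have "poly ((pderiv ^^ 1) (P k')) (a + real k / real n)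
                    = poly ((pderiv ^^ 1) (P k)) (a + real k / real n)"
      using P k(1) 2 \<open>1 \<le> s\<close> unfolding spline_pieces_def by (metis diff_Suc_1 zero_less_Suc)
    ultimately show ?thesis by simp
  qed simp
qed

lemma spline1_has_derivative:
  assumes "spline1 q s n a f" "1 \<le> s" "1 \<le> n" "v \<in> {a..a+1}"
  obtains D where "(f has_real_derivative D) (at v within {a..a+1})"
proof -
  obtain P where P: "spline_pieces q s n a f P"
    using assms(1) by (auto simp: spline1_iff_pieces)
  have right: "\<exists>D. (f has_real_derivative D) (at v within {v..a+1})" if v: "v < a + 1"
  proof -
    obtain k where "k < n" "a + real k / real n \<le> v" "v < a + real (Suc k) / real n"
      using knot_interval_right[OF assms(3), of a v] assms(4) v by auto
    then show ?thesis using spline_pieces_right_derivative[OF P] by force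
  qed
  have left: "\<exists>D. (f has_real_derivative D) (at v within {a..v})" if v: "a < v"
  proof -
    obtain k where "k < n" "a + real k / real n < v" "v \<le> a + real (Suc k) / real n"
      using knot_interval_left[OF assms(3), of a v] assms(4) v by auto
    then show ?thesis using spline_pieces_left_derivative[OF P] by force
  qed
  consider "v = a" | "v = a + 1" | "a < v" "v < a + 1" using assms(4) by fastforce
  then show ?thesis
  proof cases
    case 1
    then show ?thesis using right that by auto
  next
    case 2
    then show ?thesis using left that by auto
  next
    case 3
    obtain k where k: "k < n" "a + real k / real n \<le> v" "v < a + real (Suc k) / real n"
      using knot_interval_right[OF assms(3), of a v] 3 by auto
    obtain k' where k': "k' < n" "a + real k' / real n < v" "v \<le> a + real (Suc k') / real n"
      using knot_interval_left[OF assms(3), of a v] 3 by auto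
    have "poly (pderiv (P k')) v = poly (pderiv (P k)) v"
      using spline_pieces_one_sided_derivatives_agree[OF P assms(2) k k'] .
    then have "(f has_real_derivative poly (pderiv (P k)) v) (at v within {a..v})"
      using spline_pieces_left_derivative[OF P k'] by simp
    then have "(f has_real_derivative poly (pderiv (P k)) v) (at v within {a..v} \<union> {v..a+1})"
      using spline_pieces_right_derivative[OF P k] by (rule has_real_derivative_within_Un)
    moreover have "{a..v} \<union> {v..a+1} = {a..a+1}" using 3 by auto
    ultimately show ?thesis using that by auto
  qed
qed

lemma spline2_u_derivative:
  assumes "spline2 q s n a \<Psi>" "1 \<le> s" "1 \<le> n" "u \<in> {a..a+1}"
  obtains d where "spline1 q s n 0 d"
    "\<forall>v\<in>{0..1}. ((\<lambda>t. \<Psi> (t, v)) has_real_derivative d v) (at u within {a..a+1})"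
proof -
  obtain m :: nat and f g :: "nat \<Rightarrow> real \<Rightarrow> real"
    where fg: "\<forall>i<m. spline1 q s n a (f i) \<and> spline1 q s n 0 (g i)"
      "\<forall>t\<in>{a..a+1}. \<forall>v\<in>{0..1}. \<Psi> (t, v) = (\<Sum>i<m. f i t * g i v)"
    using assms(1) unfolding spline2_def by blast
  have "\<forall>i<m. \<exists>c. (f i has_real_derivative c) (at u within {a..a+1})"
    using fg(1) spline1_has_derivative assms(2-4) by metis
  then obtain c where c: "\<forall>i<m. (f i has_real_derivative c i) (at u within {a..a+1})"
    by metis
  define d where "d v = (\<Sum>i<m. c i * g i v)" for v
  have "spline1 q s n 0 d" unfolding d_def using fg(1) by (intro spline1_sum) auto
  moreover have "((\<lambda>t. \<Psi> (t, v)) has_real_derivative d v) (at u within {a..a+1})"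
    if "v \<in> {0..1}" for v
  proof -
    have "((\<lambda>t. \<Sum>i<m. f i t * g i v) has_real_derivative d v) (at u within {a..a+1})"
      unfolding d_def using c by (intro DERIV_sum DERIV_cmult_right) auto
    then show ?thesis
      by (rule has_field_derivative_transform_within[where d=1]) (use fg(2) that assms(4) in auto)
  qed
  ultimately show ?thesis using that by blast
qed

lemma spline_pieces_weighted_derivative:
  assumes g: "spline_pieces q s n 0 g Q" and w: "spline_pieces q s n 0 w W" and "k < n"
    and g': "\<forall>v\<in>{0..1}. (g has_real_derivative g' v) (at v within {0..1})"
    and weighted: "\<forall>v\<in>{0..1}. w v = poly \<beta> v * g' v"
  shows "W k = \<beta> * pderiv (Q k)"
proof (rule poly_eq_if_eq_on_Ioo)
  show "real k / real n < real (Suc k) / real n"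
    using \<open>k < n\<close> by (simp add: divide_strict_right_mono)
  show "\<forall>x\<in>{real k / real n<..<real (Suc k) / real n}. poly (W k) x = poly (\<beta> * pderiv (Q k)) x"
  proof
    fix x assume x: "x \<in> {real k / real n<..<real (Suc k) / real n}"
    then have "x \<in> {0..1}"
      using knot_interval_bounds[OF \<open>k < n\<close>, of 0]
      unfolding greaterThanLessThan_iff atLeastAtMost_iff by linarith
    moreover have "(g has_real_derivative poly (pderiv (Q k)) x) (at x within {0..1})"
      using spline_pieces_interior_derivative[OF g \<open>k < n\<close>, of x] x by simp
    ultimately have "w x = poly \<beta> x * poly (pderiv (Q k)) x"
      using g' weighted has_real_derivative_unique_within_interval[of g _ x 0 1] by force
    moreover have "w x = poly (W k) x" using w \<open>k < n\<close> x unfolding spline_pieces_def by auto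
    ultimately show "poly (W k) x = poly (\<beta> * pderiv (Q k)) x" by simp
  qed
qed

text \<open>Where the weight does not vanish, C^(p-1)-continuity of the weighted derivative
  upgrades the C^(p-1) joint of a degree p spline to a C^p joint, i.e. no joint at all.\<close>
lemma spline_pieces_glue_where_weight_nonzero:
  assumes "1 \<le> p" and g: "spline_pieces p (p - 1) n 0 g Q" and w: "spline_pieces p (p - 1) n 0 w W"
    and W: "\<forall>k<n. W k = \<beta> * pderiv (Q k)"
    and k: "0 < k" "k < n" and nonzero: "poly \<beta> (real k / real n) \<noteq> 0"
  shows "Q (k - 1) = Q k"
proof -
  have jump: "\<forall>j\<le>p - 1. poly ((pderiv ^^ j) (Q (k - 1) - Q k)) (real k / real n) = 0"
    "\<forall>j\<le>p - 1. poly ((pderiv ^^ j) (W (k - 1) - W k)) (real k / real n) = 0"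
    using g w k unfolding spline_pieces_def by (simp_all add: higher_pderiv_diff)
  have "Q (k - 1) - Q k = 0"
  proof (rule poly_eq_0_if_weighted_pderiv_vanishes)
    show "degree (Q (k - 1) - Q k) \<le> p"
      using g k unfolding spline_pieces_def by (intro degree_diff_le) auto
    show "poly (Q (k - 1) - Q k) (real k / real n) = 0"
      using jump(1) by (metis funpow_0 zero_le)
    show "\<forall>j<p. poly ((pderiv ^^ j) (\<beta> * pderiv (Q (k - 1) - Q k))) (real k / real n) = 0"
      using jump(2) W k \<open>1 \<le> p\<close> by (simp add: pderiv_diff right_diff_distrib)
  qed fact
  then show ?thesis by simp
qed

lemma spline_pieces_two_pieces:
  assumes "1 \<le> n" "K < n" and g: "spline_pieces q s n 0 g Q"
    and glued: "\<forall>k. 0 < k \<and> k < n \<and> k \<noteq> K \<longrightarrow> Q (k - 1) = Q k"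
  shows "\<forall>v\<in>{0..1}. g v = (if v \<le> real K / real n then poly (Q 0) v else poly (Q K) v)"
proof
  have below: "k < K \<longrightarrow> Q k = Q 0" for k
  proof (induction k)
    case (Suc k)
    then show ?case using glued[rule_format, of "Suc k"] \<open>K < n\<close> by auto
  qed simp
  have above: "K \<le> k \<longrightarrow> k < n \<longrightarrow> Q k = Q K" for k
  proof (induction k)
    case (Suc k)
    then show ?case using glued[rule_format, of "Suc k"] by (auto simp: le_Suc_eq)
  qed simp
  have n: "0 < real n" using \<open>1 \<le> n\<close> by simp
  fix v :: real assume v: "v \<in> {0..1}"
  show "g v = (if v \<le> real K / real n then poly (Q 0) v else poly (Q K) v)"
  proof (cases "v = 0")
    case True
    then show ?thesis using g \<open>1 \<le> n\<close> unfolding spline_pieces_def by auto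
  next
    case False
    then obtain k where k: "k < n" "real k / real n < v" "v \<le> real (Suc k) / real n"
      using knot_interval_left[OF \<open>1 \<le> n\<close>, of 0 v] v by auto
    then have "g v = poly (Q k) v" using g unfolding spline_pieces_def by auto
    moreover have "k < K" if "v \<le> real K / real n"
    proof -
      have "real k / real n < real K / real n" using k(2) that by linarith
      then show ?thesis using n by (simp add: divide_less_cancel)
    qed
    moreover have "K \<le> k" if "\<not> v \<le> real K / real n"
    proof -
      have "real K / real n < real (Suc k) / real n" using k(3) that by linarith
      then show ?thesis using n by (simp add: divide_less_cancel)
    qed
    ultimately show ?thesis using below above k(1) by auto
  qed
qed

lemma spline_polynomial_if_identity_times_spline:
  assumes "1 \<le> n" "spline1 p (p - 1) n 0 g" "spline1 p (p - 1) n 0 (\<lambda>x. x * g x)"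
  obtains A where "degree A \<le> p - 1" "\<forall>v\<in>{0..1}. g v = poly A v"
proof -
  obtain Q Q' where Q: "spline_pieces p (p - 1) n 0 g Q"
    and Q': "spline_pieces p (p - 1) n 0 (\<lambda>x. x * g x) Q'"
    using assms(2,3) by (auto simp: spline1_iff_pieces)
  have deg: "degree (Q k) \<le> p - 1" if "k < n" for k
  proof -
    have "Q' k = [:0, 1:] * Q k"
    proof (rule poly_eq_if_eq_on_Ioo)
      show "real k / real n < real (Suc k) / real n"
        using \<open>k < n\<close> by (simp add: divide_strict_right_mono)
      show "\<forall>x\<in>{real k / real n<..<real (Suc k) / real n}. poly (Q' k) x = poly ([:0, 1:] * Q k) x"
        using Q Q' \<open>k < n\<close> unfolding spline_pieces_def by auto
    qed
    moreover have "degree (Q' k) \<le> p" using Q' \<open>k < n\<close> unfolding spline_pieces_def by auto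
    ultimately show ?thesis by (cases "Q k = 0") (auto simp: degree_mult_eq)
  qed
  have glued: "\<forall>k. 0 < k \<and> k < n \<and> k \<noteq> 0 \<longrightarrow> Q (k - 1) = Q k"
  proof (intro allI impI)
    fix k assume k: "0 < k \<and> k < n \<and> k \<noteq> 0"
    have "Q (k - 1) - Q k = 0"
    proof (rule poly_eq_0_if_higher_pderiv_vanish)
      show "degree (Q (k - 1) - Q k) \<le> p - 1"
        using deg k by (intro degree_diff_le) auto
      show "\<forall>j\<le>p - 1. poly ((pderiv ^^ j) (Q (k - 1) - Q k)) (real k / real n) = 0"
        using Q k unfolding spline_pieces_def by (simp add: higher_pderiv_diff)
    qed
    then show "Q (k - 1) = Q k" by simp
  qed
  show ?thesis
    using that[of "Q 0"] deg[of 0] spline_pieces_two_pieces[OF assms(1) _ Q glued] assms(1) by auto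
qed

section \<open>Spaces of two-piece polynomials\<close>

lemma sum_fun_apply: "(\<Sum>i\<in>I. f i) x = (\<Sum>i\<in>I. f i x)"
  by (induction I rule: infinite_finite_induct) auto

definition fun_scale :: "real \<Rightarrow> (real \<Rightarrow> real) \<Rightarrow> real \<Rightarrow> real" where
  "fun_scale r f x = r * f x"

interpretation fun_space: vector_space fun_scale
  by unfold_locales (auto simp: fun_scale_def fun_eq_iff algebra_simps)

lemma lin_indep_scalars_zero:
  assumes "lin_indep B" "(\<Sum>g\<in>B. fun_scale (c g) g) = 0" "g \<in> B"
  shows "c g = 0"
proof -
  have "\<forall>x. (\<Sum>b\<in>B. c b * b x) = 0"
    using assms(2) by (simp add: fun_eq_iff sum_fun_apply fun_scale_def)
  then show ?thesis using assms(1,3) unfolding lin_indep_def by blast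
qed

lemma dim_atmost_if_spanned_by_family:
  assumes "finite I" "\<forall>g\<in>V. \<exists>c. \<forall>x. g x = (\<Sum>i\<in>I. c i * b i x)"
  shows "dim_atmost V (card I)"
  unfolding dim_atmost_def
proof (intro allI impI)
  fix B assume B: "B \<subseteq> V \<and> finite B \<and> lin_indep B"
  have "fun_space.independent B"
    using B lin_indep_scalars_zero[of B] by (intro fun_space.independent_if_scalars_zero) auto
  moreover have "B \<subseteq> fun_space.span (b ` I)"
  proof
    fix g assume "g \<in> B"
    then obtain c where "\<forall>x. g x = (\<Sum>i\<in>I. c i * b i x)" using B assms(2) by blast
    then have "g = (\<Sum>i\<in>I. fun_scale (c i) (b i))"
      by (simp add: fun_eq_iff sum_fun_apply fun_scale_def)
    also have "\<dots> \<in> fun_space.span (b ` I)"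
      by (intro fun_space.span_sum fun_space.span_scale fun_space.span_base) auto
    finally show "g \<in> fun_space.span (b ` I)" .
  qed
  ultimately have "card B \<le> card (b ` I)"
    using fun_space.independent_span_bound assms(1) by blast
  also have "\<dots> \<le> card I" using assms(1) by (rule card_image_le)
  finally show "card B \<le> card I" .
qed

definition two_piece_poly :: "nat \<Rightarrow> real \<Rightarrow> (real \<Rightarrow> real) \<Rightarrow> bool" where
  "two_piece_poly q c g \<longleftrightarrow> (\<exists>A B. degree A \<le> q \<and> degree B \<le> q \<and>
     (\<forall>v. g v = (if v \<in> {0..1} then if v \<le> c then poly A v else poly B v else 0)))"

lemma poly_eq_sum_upto_degree_bound:
  fixes A :: "'a::comm_semiring_1 poly"
  assumes "degree A \<le> q"
  shows "poly A x = (\<Sum>j\<le>q. coeff A j * x ^ j)"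
proof -
  have "poly A x = (\<Sum>j\<le>degree A. coeff A j * x ^ j)" by (rule poly_altdef)
  also have "\<dots> = (\<Sum>j\<le>q. coeff A j * x ^ j)"
    using assms by (intro sum.mono_neutral_left) (auto simp: coeff_eq_0)
  finally show ?thesis .
qed

lemma dim_atmost_two_piece_poly:
  assumes "\<forall>g\<in>V. two_piece_poly q c g"
  shows "dim_atmost V (2 * q + 2)"
proof -
  define b :: "bool \<times> nat \<Rightarrow> real \<Rightarrow> real"
    where "b = (\<lambda>(left, j) x. if x \<in> {0..1} \<and> (x \<le> c \<longleftrightarrow> left) then x ^ j else 0)"
  have split: "(\<Sum>i\<in>UNIV \<times> {..q}. d i * b i x)
      = (\<Sum>j\<le>q. d (False, j) * b (False, j) x) + (\<Sum>j\<le>q. d (True, j) * b (True, j) x)" for d x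
    unfolding sum.cartesian_product' UNIV_bool by simp
  have "\<exists>d. \<forall>x. g x = (\<Sum>i\<in>UNIV \<times> {..q}. d i * b i x)" if "g \<in> V" for g
  proof -
    from assms that have "two_piece_poly q c g" by blast
    then obtain A B where AB: "degree A \<le> q" "degree B \<le> q"
      "\<forall>v. g v = (if v \<in> {0..1} then if v \<le> c then poly A v else poly B v else 0)"
      unfolding two_piece_poly_def by blast
    define d where "d = (\<lambda>(left, j). coeff (if left then A else B) j)"
    have "g x = (\<Sum>i\<in>UNIV \<times> {..q}. d i * b i x)" for x
      unfolding split using AB poly_eq_sum_upto_degree_bound[OF AB(1), of x]
        poly_eq_sum_upto_degree_bound[OF AB(2), of x]
      by (cases "x \<in> {0..1}"; cases "x \<le> c") (simp_all add: b_def d_def cong: conj_cong)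
    then show ?thesis by blast
  qed
  then have "dim_atmost V (card (UNIV \<times> {..q} :: (bool \<times> nat) set))"
    by (intro dim_atmost_if_spanned_by_family[where b = b]) simp_all
  then show ?thesis by (simp add: card_cartesian_product)
qed

section \<open>Traces across the interface\<close>

lemma patch_transversal_derivative_spline:
  assumes "1 \<le> n" "1 \<le> s" "u \<in> {a..a+1}"
    and F: "spline2 q s n a (\<lambda>x. fst (F x))" "spline2 q s n a (\<lambda>x. snd (F x))"
    and \<phi>F: "spline2 q s n a (\<phi> \<circ> F)"
    and C1: "C1_grad \<Omega> \<phi> G" and image: "F ` rect a \<subseteq> \<Omega>"
  obtains d where "spline1 q s n 0 d" "\<forall>v\<in>{0..1}. d v = G (F (u, v)) \<bullet> Du a F (u, v)"
proof -
  obtain d where d: "spline1 q s n 0 d"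
    "\<forall>v\<in>{0..1}. ((\<lambda>t. (\<phi> \<circ> F) (t, v)) has_real_derivative d v) (at u within {a..a+1})"
    using spline2_u_derivative[OF \<phi>F assms(2,1,3)] by blast
  obtain d1 where d1: "\<forall>v\<in>{0..1}. ((\<lambda>t. fst (F (t, v))) has_real_derivative d1 v) (at u within {a..a+1})"
    using spline2_u_derivative[OF F(1) assms(2,1,3)] by blast
  obtain d2 where d2: "\<forall>v\<in>{0..1}. ((\<lambda>t. snd (F (t, v))) has_real_derivative d2 v) (at u within {a..a+1})"
    using spline2_u_derivative[OF F(2) assms(2,1,3)] by blast
  have "d v = G (F (u, v)) \<bullet> Du a F (u, v)" if v: "v \<in> {0..1}" for v
  proof -
    have "((\<lambda>t. fst (F (t, v))) has_vector_derivative d1 v) (at u within {a..a+1})"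
      "((\<lambda>t. snd (F (t, v))) has_vector_derivative d2 v) (at u within {a..a+1})"
      using d1 d2 v by (simp_all add: has_real_derivative_iff_has_vector_derivative)
    from has_vector_derivative_Pair[OF this]
    have DF: "((\<lambda>t. F (t, v)) has_vector_derivative (d1 v, d2 v)) (at u within {a..a+1})"
      by simp
    then have Du: "Du a F (u, v) = (d1 v, d2 v)"
      unfolding Du_def using vector_derivative_within_closed_interval[of a "a + 1"] assms(3) by simp
    have slice: "(t, v) \<in> rect a" if "t \<in> {a..a+1}" for t using that v unfolding rect_def by auto
    have "(\<phi> has_derivative (\<lambda>y. G (F (u, v)) \<bullet> y)) (at (F (u, v)) within \<Omega>)"
      using C1 image slice[OF assms(3)] unfolding C1_grad_def by blast
    then have "(\<phi> has_derivative (\<lambda>y. G (F (u, v)) \<bullet> y)) (at (F (u, v)) within (\<lambda>t. F (t, v)) ` {a..a+1})"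
      by (rule has_derivative_subset) (use image slice in auto)
    from vector_derivative_diff_chain_within[OF DF this]
    have "((\<lambda>t. (\<phi> \<circ> F) (t, v)) has_real_derivative G (F (u, v)) \<bullet> Du a F (u, v)) (at u within {a..a+1})"
      unfolding Du by (simp add: comp_def has_real_derivative_iff_has_vector_derivative)
    with d(2) v assms(3) show ?thesis
      using has_real_derivative_unique_within_interval[of "\<lambda>t. (\<phi> \<circ> F) (t, v)" "d v" u a "a + 1"]
      by auto
  qed
  with d(1) that show ?thesis by blast
qed

lemma interface_chain_rule:
  assumes "1 \<le> n" "1 \<le> s" "v \<in> {0..1}"
    and F: "spline2 q s n (-1) (\<lambda>x. fst (F x))" "spline2 q s n (-1) (\<lambda>x. snd (F x))"
    and C1: "C1_grad \<Omega> \<phi> G" and image: "F ` rect (-1) \<subseteq> \<Omega>"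
  shows "((\<lambda>v. \<phi> (F0 F v)) has_real_derivative G (F0 F v) \<bullet> DF0 F v) (at v within {0..1})"
proof -
  have "(0::real) \<in> {-1..-1+1}" by simp
  from spline2_slice[OF F(1) this] spline2_slice[OF F(2) this]
  have "spline1 q s n 0 (\<lambda>v. fst (F (0, v)))" "spline1 q s n 0 (\<lambda>v. snd (F (0, v)))" .
  then obtain D1 D2 where
    "((\<lambda>v. fst (F (0, v))) has_vector_derivative D1) (at v within {0..1})"
    "((\<lambda>v. snd (F (0, v))) has_vector_derivative D2) (at v within {0..1})"
    using spline1_has_derivative[OF _ assms(2,1)] assms(3)
    by (metis add_0 has_real_derivative_iff_has_vector_derivative)
  from has_vector_derivative_Pair[OF this]
  have DF: "(F0 F has_vector_derivative (D1, D2)) (at v within {0..1})"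
    by (simp add: F0_def[abs_def])
  then have "DF0 F v = (D1, D2)"
    unfolding DF0_def using vector_derivative_within_closed_interval[of 0 1] assms(3) by simp
  have slice: "(0, t) \<in> rect (-1)" if "t \<in> {0..1}" for t using that unfolding rect_def by auto
  have "(\<phi> has_derivative (\<lambda>y. G (F0 F v) \<bullet> y)) (at (F0 F v) within \<Omega>)"
    using C1 image slice[OF assms(3)] unfolding C1_grad_def F0_def by blast
  then have "(\<phi> has_derivative (\<lambda>y. G (F0 F v) \<bullet> y)) (at (F0 F v) within F0 F ` {0..1})"
    by (rule has_derivative_subset) (use image slice in \<open>auto simp: F0_def\<close>)
  from vector_derivative_diff_chain_within[OF DF this] \<open>DF0 F v = (D1, D2)\<close> show ?thesis
    by (simp add: comp_def has_real_derivative_iff_has_vector_derivative)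
qed

text \<open>Tested against any vector, the derivatives across the interface split along the
  transversal vector d and the tangent DF0; for the right patch this is where analysis-suitable
  G^1-continuity enters.\<close>
lemma AS_G1_transversal_decomposition:
  assumes G1: "AS_G1 FL FR aL aR bL bR" and v: "v \<in> {0..1}"
  shows "r \<bullet> Du (-1) FL (0, v) = poly aL v * (r \<bullet> dvec FL aL bL v) + poly bL v * (r \<bullet> DF0 FL v)"
    and "r \<bullet> Du 0 FR (0, v) = poly aR v * (r \<bullet> dvec FL aL bL v) + poly bR v * (r \<bullet> DF0 FL v)"
proof -
  have aL: "poly aL v \<noteq> 0" using G1 v unfolding AS_G1_def by force
  have "r \<bullet> dvec FL aL bL v = (r \<bullet> Du (-1) FL (0, v) - poly bL v * (r \<bullet> DF0 FL v)) / poly aL v"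
    unfolding dvec_def by (simp add: inner_diff_right)
  with aL show left: "r \<bullet> Du (-1) FL (0, v) = poly aL v * (r \<bullet> dvec FL aL bL v) + poly bL v * (r \<bullet> DF0 FL v)"
    by (simp add: field_simps)
  have "poly aR v *\<^sub>R Du (-1) FL (0, v) - poly aL v *\<^sub>R Du 0 FR (0, v)
      = (poly aR v * poly bL v - poly aL v * poly bR v) *\<^sub>R DF0 FL v"
    using G1 v unfolding AS_G1_def by blast
  from arg_cong[OF this, of "inner r"]
  have "poly aR v * (r \<bullet> Du (-1) FL (0, v)) - poly aL v * (r \<bullet> Du 0 FR (0, v))
      = (poly aR v * poly bL v - poly aL v * poly bR v) * (r \<bullet> DF0 FL v)"
    by (simp add: inner_diff_right)
  then have "poly aL v * (r \<bullet> Du 0 FR (0, v))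
      = poly aL v * (poly aR v * (r \<bullet> dvec FL aL bL v) + poly bR v * (r \<bullet> DF0 FL v))"
    unfolding left by (simp add: algebra_simps)
  with aL show "r \<bullet> Du 0 FR (0, v) = poly aR v * (r \<bullet> dvec FL aL bL v) + poly bR v * (r \<bullet> DF0 FL v)"
    by simp
qed

lemma trace_space_relations:
  assumes "1 \<le> n" "2 \<le> p"
    and patches: "patch p n (-1) FL" "patch p n 0 FR"
    and interface: "\<forall>v\<in>{0..1}. FL (0, v) = FR (0, v)"
    and G1: "AS_G1 FL FR aL aR bL bR"
    and trace: "(g0, g1) \<in> trace_space p n FL FR aL bL"
  obtains sL sR w where "spline1 p (p - 1) n 0 g0" "spline1 p (p - 1) n 0 sL" "spline1 p (p - 1) n 0 sR"
    "\<forall>v\<in>{0..1}. (g0 has_real_derivative w v) (at v within {0..1})"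
    "\<forall>v\<in>{0..1}. sL v = poly aL v * g1 v + poly bL v * w v"
    "\<forall>v\<in>{0..1}. sR v = poly aR v * g1 v + poly bR v * w v"
proof -
  obtain \<phi> G where V: "Vsp p n FL FR \<phi>" and C1: "C1_grad (Omega FL FR) \<phi> G"
    and g0: "\<forall>v. g0 v = (if v \<in> {0..1} then \<phi> (F0 FL v) else 0)"
    and g1: "\<forall>v. g1 v = (if v \<in> {0..1} then G (F0 FL v) \<bullet> dvec FL aL bL v else 0)"
    using trace unfolding trace_space_def by blast
  have s: "1 \<le> p - 1" using assms(2) by simp
  have imageL: "FL ` rect (-1) \<subseteq> Omega FL FR" and imageR: "FR ` rect 0 \<subseteq> Omega FL FR"
    unfolding Omega_def by auto
  have FL: "spline2 p (p - 1) n (-1) (\<lambda>x. fst (FL x))" "spline2 p (p - 1) n (-1) (\<lambda>x. snd (FL x))"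
    and FR: "spline2 p (p - 1) n 0 (\<lambda>x. fst (FR x))" "spline2 p (p - 1) n 0 (\<lambda>x. snd (FR x))"
    using patches unfolding patch_def by auto
  have \<phi>F: "spline2 p (p - 1) n (-1) (\<phi> \<circ> FL)" "spline2 p (p - 1) n 0 (\<phi> \<circ> FR)"
    using V unfolding Vsp_def by auto
  have interface_param: "(0::real) \<in> {-1..-1+1}" "(0::real) \<in> {0..0+1}" by simp_all
  obtain sL where sL: "spline1 p (p - 1) n 0 sL"
    "\<forall>v\<in>{0..1}. sL v = G (FL (0, v)) \<bullet> Du (-1) FL (0, v)"
    using patch_transversal_derivative_spline[OF assms(1) s interface_param(1) FL \<phi>F(1) C1 imageL] .
  obtain sR where sR: "spline1 p (p - 1) n 0 sR"
    "\<forall>v\<in>{0..1}. sR v = G (FR (0, v)) \<bullet> Du 0 FR (0, v)"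
    using patch_transversal_derivative_spline[OF assms(1) s interface_param(2) FR \<phi>F(2) C1 imageR] .
  have "spline1 p (p - 1) n 0 (\<lambda>v. (\<phi> \<circ> FL) (0, v))"
    using spline2_slice[OF \<phi>F(1) interface_param(1)] .
  then have "spline1 p (p - 1) n 0 g0"
    by (rule spline1_cong) (use g0 in \<open>auto simp: F0_def\<close>)
  define w where "w v = G (F0 FL v) \<bullet> DF0 FL v" for v
  have "(g0 has_real_derivative w v) (at v within {0..1})" if v: "v \<in> {0..1}" for v
    unfolding w_def
    using interface_chain_rule[OF assms(1) s v FL C1 imageL] g0 v
    by (auto intro: has_field_derivative_transform_within[where d = 1])
  moreover have "sL v = poly aL v * g1 v + poly bL v * w v \<and> sR v = poly aR v * g1 v + poly bR v * w v"
    if v: "v \<in> {0..1}" for v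
    using AS_G1_transversal_decomposition[OF G1 v, of "G (F0 FL v)"] g1 sL(2) sR(2) interface v
    unfolding w_def F0_def by auto
  ultimately show ?thesis using that \<open>spline1 p (p - 1) n 0 g0\<close> sL(1) sR(1) by blast
qed

lemma trace_value_two_piece_poly:
  assumes "1 \<le> n" "2 \<le> p"
    and patches: "patch p n (-1) FL" "patch p n 0 FR"
    and interface: "\<forall>v\<in>{0..1}. FL (0, v) = FR (0, v)"
    and G1: "AS_G1 FL FR aL aR bL bR"
    and trace: "(g, \<lambda>_. 0) \<in> trace_space p n FL FR aL bL"
    and weight: "\<beta> = bL \<or> \<beta> = bR"
    and K: "K < n" "\<forall>k. 0 < k \<and> k < n \<and> k \<noteq> K \<longrightarrow> poly \<beta> (real k / real n) \<noteq> 0"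
  shows "two_piece_poly p (real K / real n) g"
proof -
  obtain sL sR w where sg: "spline1 p (p - 1) n 0 g"
    and s: "spline1 p (p - 1) n 0 sL" "spline1 p (p - 1) n 0 sR"
    and w: "\<forall>v\<in>{0..1}. (g has_real_derivative w v) (at v within {0..1})"
    and rel: "\<forall>v\<in>{0..1}. sL v = poly bL v * w v" "\<forall>v\<in>{0..1}. sR v = poly bR v * w v"
    using trace_space_relations[OF assms(1-2) patches interface G1 trace] by auto
  obtain s where "spline1 p (p - 1) n 0 s" "\<forall>v\<in>{0..1}. s v = poly \<beta> v * w v"
    using weight s rel by blast
  then obtain Q S where Q: "spline_pieces p (p - 1) n 0 g Q" and S: "spline_pieces p (p - 1) n 0 s S"
    and sw: "\<forall>v\<in>{0..1}. s v = poly \<beta> v * w v"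
    using sg by (auto simp: spline1_iff_pieces)
  have "\<forall>k<n. S k = \<beta> * pderiv (Q k)"
    using spline_pieces_weighted_derivative[OF Q S _ w sw] by blast
  then have "\<forall>k. 0 < k \<and> k < n \<and> k \<noteq> K \<longrightarrow> Q (k - 1) = Q k"
    using spline_pieces_glue_where_weight_nonzero[OF _ Q S] assms(2) K(2) by auto
  from spline_pieces_two_pieces[OF assms(1) K(1) Q this]
  show ?thesis
    using trace Q K(1) unfolding two_piece_poly_def trace_space_def spline_pieces_def
    by (intro exI[of _ "Q 0"] exI[of _ "Q K"]) (auto simp: assms(1))
qed

lemma trace_derivative_polynomial:
  assumes "1 \<le> n" "2 \<le> p"
    and patches: "patch p n (-1) FL" "patch p n 0 FR"
    and interface: "\<forall>v\<in>{0..1}. FL (0, v) = FR (0, v)"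
    and G1: "AS_G1 FL FR aL aR bL bR"
    and trace: "((\<lambda>_. 0), g) \<in> trace_space p n FL FR aL bL"
    and indep: "\<forall>c1 c2. smult c1 aL + smult c2 aR = 0 \<longrightarrow> c1 = 0 \<and> c2 = 0"
  obtains A where "degree A \<le> p - 1" "\<forall>v. g v = (if v \<in> {0..1} then poly A v else 0)"
proof -
  obtain sL sR w where s: "spline1 p (p - 1) n 0 sL" "spline1 p (p - 1) n 0 sR"
    and w: "\<forall>v\<in>{0..1}. ((\<lambda>_. 0) has_real_derivative w v) (at v within {0..1})"
    and rel: "\<forall>v\<in>{0..1}. sL v = poly aL v * g v + poly bL v * w v"
      "\<forall>v\<in>{0..1}. sR v = poly aR v * g v + poly bR v * w v"
    using trace_space_relations[OF assms(1-2) patches interface G1 trace] by metis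
  have "w v = 0" if "v \<in> {0..1}" for v
    using has_real_derivative_unique_within_interval[of "\<lambda>_. 0" "w v" v 0 1 0] w that by auto
  with rel have rel': "\<forall>v\<in>{0..1}. sL v = poly aL v * g v \<and> sR v = poly aR v * g v" by simp
  have deg: "degree aL \<le> 1" "degree aR \<le> 1" using G1 unfolding AS_G1_def by auto
  obtain c1 c2 where c: "smult c1 aL + smult c2 aR = 1"
    by (rule independent_linear_polys_span[OF deg _ indep, where T = 1]) auto
  obtain d1 d2 where d: "smult d1 aL + smult d2 aR = [:0, 1:]"
    by (rule independent_linear_polys_span[OF deg _ indep, where T = "[:0, 1:]"]) auto
  have combs: "spline1 p (p - 1) n 0 (\<lambda>x. c1 * sL x + c2 * sR x)"
    "spline1 p (p - 1) n 0 (\<lambda>x. d1 * sL x + d2 * sR x)"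
    using s by (simp_all add: spline1_add spline1_scale)
  have eqs: "c1 * sL x + c2 * sR x = g x" "d1 * sL x + d2 * sR x = x * g x" if "x \<in> {0..1}" for x
  proof -
    have "c1 * poly aL x + c2 * poly aR x = 1" "d1 * poly aL x + d2 * poly aR x = x"
      using arg_cong[OF c, of "\<lambda>P. poly P x"] arg_cong[OF d, of "\<lambda>P. poly P x"] by simp_all
    moreover have "c1 * sL x + c2 * sR x = (c1 * poly aL x + c2 * poly aR x) * g x"
      "d1 * sL x + d2 * sR x = (d1 * poly aL x + d2 * poly aR x) * g x"
      using rel' that by (simp_all add: algebra_simps)
    ultimately show "c1 * sL x + c2 * sR x = g x" "d1 * sL x + d2 * sR x = x * g x" by simp_all
  qed
  have "spline1 p (p - 1) n 0 g"
    by (rule spline1_cong[OF combs(1)]) (simp add: eqs(1))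
  moreover have "spline1 p (p - 1) n 0 (\<lambda>x. x * g x)"
    by (rule spline1_cong[OF combs(2)]) (simp add: eqs(2))
  ultimately obtain A where "degree A \<le> p - 1" "\<forall>v\<in>{0..1}. g v = poly A v"
    using spline_polynomial_if_identity_times_spline assms(1) by blast
  with trace that show ?thesis unfolding trace_space_def by auto
qed

theorem theorem2:
  fixes p :: nat
  assumes "p \<ge> 2"
  shows "\<exists>C::nat. \<forall>(n::nat) FL FR aL aR bL bR G0 G1.
     n \<ge> 1 \<and>
     patch p n (-1) FL \<and> patch p n 0 FR \<and>
     interior (FL ` rect (-1)) \<inter> interior (FR ` rect 0) = {} \<and>
     (\<forall>v\<in>{0..1}. FL (0, v) = FR (0, v)) \<and>
     AS_G1 FL FR aL aR bL bR \<and>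
     lin_space G0 \<and> lin_space G1 \<and>
     G0 \<times> G1 \<subseteq> trace_space p n FL FR aL bL
     \<longrightarrow> ((bL \<noteq> 0 \<or> bR \<noteq> 0) \<longrightarrow> dim_atmost G0 C) \<and>
         ((\<forall>c1 c2. smult c1 aL + smult c2 aR = 0 \<longrightarrow> c1 = 0 \<and> c2 = 0) \<longrightarrow> dim_atmost G1 C)"
proof (intro exI[of _ "2 * p + 2"] allI impI conjI)
  fix n FL FR aL aR bL bR G0 G1
  assume H: "n \<ge> 1 \<and>
     patch p n (-1) FL \<and> patch p n 0 FR \<and>
     interior (FL ` rect (-1)) \<inter> interior (FR ` rect 0) = {} \<and>
     (\<forall>v\<in>{0..1}. FL (0, v) = FR (0, v)) \<and>
     AS_G1 FL FR aL aR bL bR \<and>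
     lin_space G0 \<and> lin_space G1 \<and>
     G0 \<times> G1 \<subseteq> trace_space p n FL FR aL bL"
  then have geometry: "1 \<le> n" "patch p n (-1) FL" "patch p n 0 FR"
      "\<forall>v\<in>{0..1}. FL (0, v) = FR (0, v)" "AS_G1 FL FR aL aR bL bR"
    by simp_all
  from H have traces: "(g0, g1) \<in> trace_space p n FL FR aL bL" if "g0 \<in> G0" "g1 \<in> G1" for g0 g1
    using that by blast
  from H have zero: "(\<lambda>_. 0) \<in> G0" "(\<lambda>_. 0) \<in> G1"
    unfolding lin_space_def by simp_all
  note trace_lemmas = trace_value_two_piece_poly[OF geometry(1) assms geometry(2-5)]
    trace_derivative_polynomial[OF geometry(1) assms geometry(2-5)]
  show "dim_atmost G0 (2 * p + 2)" if "bL \<noteq> 0 \<or> bR \<noteq> 0"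
  proof -
    define \<beta> where "\<beta> = (if bL \<noteq> 0 then bL else bR)"
    have \<beta>: "\<beta> = bL \<or> \<beta> = bR" "\<beta> \<noteq> 0" using that unfolding \<beta>_def by auto
    then have "degree \<beta> \<le> 1" using geometry(5) unfolding AS_G1_def by auto
    then obtain K where K: "K < n" "\<forall>k. 0 < k \<and> k < n \<and> k \<noteq> K \<longrightarrow> poly \<beta> (real k / real n) \<noteq> 0"
      using knot_avoiding_roots[OF _ \<beta>(2) geometry(1)] by blast
    have "two_piece_poly p (real K / real n) g" if "g \<in> G0" for g
      using trace_lemmas(1)[OF traces[OF that zero(2)] \<beta>(1) K] .
    then show ?thesis by (intro dim_atmost_two_piece_poly) blast
  qed
  show "dim_atmost G1 (2 * p + 2)" if indep: "\<forall>c1 c2. smult c1 aL + smult c2 aR = 0 \<longrightarrow> c1 = 0 \<and> c2 = 0"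
  proof -
    have "two_piece_poly p 0 g" if g: "g \<in> G1" for g
    proof -
      obtain A where "degree A \<le> p - 1" "\<forall>v. g v = (if v \<in> {0..1} then poly A v else 0)"
        using trace_lemmas(2)[OF traces[OF zero(1) g] indep] by blast
      then show ?thesis unfolding two_piece_poly_def by (intro exI[of _ A] conjI) auto
    qed
    then show ?thesis by (intro dim_atmost_two_piece_poly) blast
  qed
qed

end
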